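(* Let $G=(V,E)$ be a strongly connected weighted directed graph and $\delta\in[0,1]$. For any $T\subseteq S\subseteq V$, $$\mathsf{fp}_{r=1}^\delta(G,S)=\mathsf{fp}_{r=1}^\delta(G,T)+\mathsf{fp}_{r=1}^\delta(G,S\setminus T).$$
   Context: Mixed $\delta$-updating on a weighted directed graph with weights $w_{uv}\ge0$ ($u\to v$ is an edge iff $w_{uv}>0$): each vertex holds a mutant (fitness $r$) or wild-type (fitness $1$); $f_S(u)$ is the fitness at $u$ when $S$ is the mutant set. At each step, with probability $\delta$ a death-Birth step: choose $v$ uniformly to die, choose $u$ with probability proportional to $f_S(u)w_{uv}$, $u$ copies its type onto $v$; with probability $1-\delta$ a Birth-death step: choose $u$ with probability proportional to $f_S(u)$, choose $v$ with probability proportional to $w_{uv}$, $u$ copies its type onto $v$. $\mathsf{fp}_r^\delta(G,S_0)$ is the probability all vertices eventually become mutant from initial mutant set $S_0$. *)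

theory Defs
  imports Complex_Main
begin

definition edges :: "'v set \<Rightarrow> ('v \<Rightarrow> 'v \<Rightarrow> real) \<Rightarrow> ('v \<times> 'v) set" where
  "edges V w = {(u, v). u \<in> V \<and> v \<in> V \<and> w u v > 0}"

definition strongly_connected :: "'v set \<Rightarrow> ('v \<Rightarrow> 'v \<Rightarrow> real) \<Rightarrow> bool" where
  "strongly_connected V w \<longleftrightarrow> (\<forall>u\<in>V. \<forall>v\<in>V. (u, v) \<in> (edges V w)\<^sup>*)"

definition fit :: "real \<Rightarrow> 'v set \<Rightarrow> 'v \<Rightarrow> real" where
  "fit r S u = (if u \<in> S then r else 1)"

text \<open>Result of u copying its type onto v.\<close>
definition upd :: "'v set \<Rightarrow> 'v \<Rightarrow> 'v \<Rightarrow> 'v set" where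
  "upd S u v = (if u \<in> S then insert v S else S - {v})"

definition trans_prob ::
  "'v set \<Rightarrow> ('v \<Rightarrow> 'v \<Rightarrow> real) \<Rightarrow> real \<Rightarrow> real \<Rightarrow> 'v set \<Rightarrow> 'v set \<Rightarrow> real" where
  "trans_prob V w r \<delta> S S' =
     \<delta> * (\<Sum>v\<in>V. (1 / real (card V)) *
            (\<Sum>u\<in>V. (fit r S u * w u v / (\<Sum>x\<in>V. fit r S x * w x v)) *
                      (if upd S u v = S' then 1 else 0)))
   + (1 - \<delta>) * (\<Sum>u\<in>V. (fit r S u / (\<Sum>x\<in>V. fit r S x)) *
            (\<Sum>v\<in>V. (w u v / (\<Sum>y\<in>V. w u y)) *
                      (if upd S u v = S' then 1 else 0)))"

fun all_mutant_prob ::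
  "'v set \<Rightarrow> ('v \<Rightarrow> 'v \<Rightarrow> real) \<Rightarrow> real \<Rightarrow> real \<Rightarrow> nat \<Rightarrow> 'v set \<Rightarrow> real" where
  "all_mutant_prob V w r \<delta> 0 S = (if S = V then 1 else 0)"
| "all_mutant_prob V w r \<delta> (Suc n) S =
     (\<Sum>S'\<in>Pow V. trans_prob V w r \<delta> S S' * all_mutant_prob V w r \<delta> n S')"

text \<open>Fixation probability: probability that all vertices eventually become mutant
  (the all-mutant state is absorbing, so this is the supremum/limit over n).\<close>
definition fp :: "'v set \<Rightarrow> ('v \<Rightarrow> 'v \<Rightarrow> real) \<Rightarrow> real \<Rightarrow> real \<Rightarrow> 'v set \<Rightarrow> real" where
  "fp V w r \<delta> S0 = (SUP n. all_mutant_prob V w r \<delta> n S0)"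

end

theory Submission
  imports Defs
begin

(*
  With r = 1 every fitness equals 1, so a step of mixed delta-updating is a
  random ordered pair (u, v), drawn independently of the current mutant set,
  after which u copies its type onto v.  Since copying commutes with unions,
  running the chains from T, from S - T and from S on the same sequence of
  pairs keeps the third set the disjoint union of the first two.  Hence the
  fixation probability of S exceeds the sum of those of T and S - T by the
  probability that both lineages are still alive at time n, which is at most
  the probability that the lineage of T is neither extinct nor fixed.  By
  strong connectivity a lineage that is neither extinct nor fixed reaches
  fixation within |V| steps with probability bounded away from 0, so this
  probability decays geometrically.
*)

lemma upd_subset: "S \<subseteq> V \<Longrightarrow> v \<in> V \<Longrightarrow> upd S u v \<subseteq> V"
  by (auto simp: upd_def)

lemma upd_Un: "upd (A \<union> B) u v = upd A u v \<union> upd B u v"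
  by (auto simp: upd_def)

lemma upd_disjoint: "A \<inter> B = {} \<Longrightarrow> upd A u v \<inter> upd B u v = {}"
  by (auto simp: upd_def)

lemma upd_empty: "upd {} u v = {}"
  by (simp add: upd_def)

lemma upd_full: "u \<in> V \<Longrightarrow> v \<in> V \<Longrightarrow> upd V u v = V"
  by (auto simp: upd_def)

lemma strongly_connected_escape:
  assumes "strongly_connected V w" "S \<subseteq> V" "S \<noteq> {}" "S \<noteq> V"
  obtains u v where "u \<in> S" "v \<in> V - S" "0 < w u v"
proof -
  obtain b x where bx: "b \<in> S" "x \<in> V - S" using assms(2-4) by blast
  have "(b, x) \<in> (edges V w)\<^sup>*"
    using assms(1,2) bx unfolding strongly_connected_def by blast
  have "y \<in> S \<or> (\<exists>u\<in>S. \<exists>v\<in>V - S. 0 < w u v)" if "(b, y) \<in> (edges V w)\<^sup>*" for y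
    using that
  proof (induction rule: rtrancl_induct)
    case base
    then show ?case using bx by simp
  next
    case (step y z)
    then show ?case by (auto simp: edges_def)
  qed
  with \<open>(b, x) \<in> (edges V w)\<^sup>*\<close> bx that show ?thesis by blast
qed

lemma strongly_connected_in_degree_pos:
  assumes "strongly_connected V w" "finite V" "\<And>u v. 0 \<le> w u v"
    and "v \<in> V" "x \<in> V" "x \<noteq> v"
  shows "0 < (\<Sum>y\<in>V. w y v)"
proof -
  have "(x, v) \<in> (edges V w)\<^sup>*"
    using assms(1,4,5) unfolding strongly_connected_def by blast
  then obtain y where "(y, v) \<in> edges V w" using assms(6) by (meson rtranclE)
  then have "y \<in> V" "0 < w y v" by (auto simp: edges_def)
  moreover have "w y v \<le> (\<Sum>y\<in>V. w y v)"
    using \<open>y \<in> V\<close> assms(2,3) by (intro member_le_sum) auto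
  ultimately show ?thesis by linarith
qed

lemma strongly_connected_out_degree_pos:
  assumes "strongly_connected V w" "finite V" "\<And>u v. 0 \<le> w u v"
    and "u \<in> V" "x \<in> V" "x \<noteq> u"
  shows "0 < (\<Sum>y\<in>V. w u y)"
proof -
  have "(u, x) \<in> (edges V w)\<^sup>*"
    using assms(1,4,5) unfolding strongly_connected_def by blast
  then obtain y where "(u, y) \<in> edges V w" using assms(6) by (metis converse_rtranclE)
  then have "y \<in> V" "0 < w u y" by (auto simp: edges_def)
  moreover have "w u y \<le> (\<Sum>y\<in>V. w u y)"
    using \<open>y \<in> V\<close> assms(2,3) by (intro member_le_sum) auto
  ultimately show ?thesis by linarith
qed

(* Probability that one neutral step lets u copy onto v: death-Birth first picks v
   (probability 1/|V|) and then u in proportion to w u v, Birth-death first picks u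
   (probability 1/|V|) and then v in proportion to w u v. *)
definition copy_prob :: "'v set \<Rightarrow> ('v \<Rightarrow> 'v \<Rightarrow> real) \<Rightarrow> real \<Rightarrow> 'v \<Rightarrow> 'v \<Rightarrow> real" where
  "copy_prob V w \<delta> u v =
     (\<delta> * (w u v / (\<Sum>x\<in>V. w x v)) + (1 - \<delta>) * (w u v / (\<Sum>y\<in>V. w u y))) / real (card V)"

lemma trans_prob_neutral:
  "trans_prob V w 1 \<delta> S S' =
     (\<Sum>u\<in>V. \<Sum>v\<in>V. copy_prob V w \<delta> u v * of_bool (upd S u v = S'))"
proof -
  let ?N = "real (card V)" and ?I = "\<lambda>u v. of_bool (upd S u v = S') :: real"
  have "trans_prob V w 1 \<delta> S S' =
      (\<Sum>v\<in>V. \<Sum>u\<in>V. \<delta> * (w u v / (\<Sum>x\<in>V. w x v)) / ?N * ?I u v)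
    + (\<Sum>u\<in>V. \<Sum>v\<in>V. (1 - \<delta>) * (w u v / (\<Sum>y\<in>V. w u y)) / ?N * ?I u v)"
    by (simp add: trans_prob_def fit_def of_bool_def sum_distrib_left mult_ac)
  also have "\<dots> = (\<Sum>u\<in>V. \<Sum>v\<in>V. copy_prob V w \<delta> u v * ?I u v)"
    by (subst sum.swap) (simp add: copy_prob_def sum.distrib[symmetric] add_divide_distrib distrib_right)
  finally show ?thesis .
qed

definition neutral_step :: "'v set \<Rightarrow> ('v \<Rightarrow> 'v \<Rightarrow> real) \<Rightarrow> ('v set \<Rightarrow> real) \<Rightarrow> 'v set \<Rightarrow> real"
  where "neutral_step V q f S = (\<Sum>u\<in>V. \<Sum>v\<in>V. q u v * f (upd S u v))"

lemma all_mutant_prob_neutral: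
  assumes "finite V" "S \<subseteq> V"
  shows "all_mutant_prob V w 1 \<delta> n S =
    (neutral_step V (copy_prob V w \<delta>) ^^ n) (\<lambda>S. of_bool (S = V)) S"
  using assms(2)
proof (induction n arbitrary: S)
  case 0
  then show ?case by simp
next
  case (Suc n)
  let ?q = "copy_prob V w \<delta>"
  have "all_mutant_prob V w 1 \<delta> (Suc n) S =
      (\<Sum>S'\<in>Pow V. \<Sum>u\<in>V. \<Sum>v\<in>V. ?q u v * of_bool (upd S u v = S') * all_mutant_prob V w 1 \<delta> n S')"
    by (simp add: trans_prob_neutral sum_distrib_right)
  also have "\<dots> = (\<Sum>u\<in>V. \<Sum>v\<in>V. \<Sum>S'\<in>Pow V.
      ?q u v * of_bool (upd S u v = S') * all_mutant_prob V w 1 \<delta> n S')"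
    by (simp add: sum.swap[where A = "Pow V"])
  also have "\<dots> = (\<Sum>u\<in>V. \<Sum>v\<in>V. ?q u v * all_mutant_prob V w 1 \<delta> n (upd S u v))"
    using assms(1) Suc.prems by (simp add: sum_distrib_left[symmetric] mult.assoc upd_subset)
  also have "\<dots> = (neutral_step V ?q ^^ Suc n) (\<lambda>S. of_bool (S = V)) S"
    using Suc
    by (simp add: upd_subset neutral_step_def[of V ?q "(neutral_step V ?q ^^ n) (\<lambda>S. of_bool (S = V))"])
  finally show ?case .
qed

lemma neutral_step_absorbing:
  assumes "\<And>u v. u \<in> V \<Longrightarrow> v \<in> V \<Longrightarrow> upd X u v = X"
  shows "neutral_step V q f X = (\<Sum>u\<in>V. \<Sum>v\<in>V. q u v) * f X"
  using assms by (simp add: neutral_step_def sum_distrib_right)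

lemma neutral_step_iter_empty:
  assumes "f {} = 0"
  shows "(neutral_step V q ^^ n) f {} = 0"
  using assms by (induction n) (simp_all add: neutral_step_absorbing upd_empty)

lemma fp_neutral_empty:
  assumes "finite V" "V \<noteq> {}"
  shows "fp V w 1 \<delta> {} = 0"
  using assms by (simp add: fp_def all_mutant_prob_neutral neutral_step_iter_empty)

lemma copy_prob_nonneg:
  assumes "\<And>u v. 0 \<le> w u v" "0 \<le> \<delta>" "\<delta> \<le> 1"
  shows "0 \<le> copy_prob V w \<delta> u v"
  unfolding copy_prob_def using assms
  by (intro divide_nonneg_nonneg add_nonneg_nonneg mult_nonneg_nonneg sum_nonneg) auto

lemma copy_prob_pos_iff:
  assumes "finite V" "\<And>u v. 0 \<le> w u v" "0 \<le> \<delta>" "\<delta> \<le> 1" "u \<in> V" "v \<in> V"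
  shows "0 < copy_prob V w \<delta> u v \<longleftrightarrow> 0 < w u v"
proof
  assume "0 < copy_prob V w \<delta> u v"
  then show "0 < w u v"
    using assms(2)[of u v] by (cases "w u v = 0") (simp_all add: copy_prob_def)
next
  assume pos: "0 < w u v"
  define a where "a = w u v / (\<Sum>x\<in>V. w x v)"
  define b where "b = w u v / (\<Sum>y\<in>V. w u y)"
  have "w u v \<le> (\<Sum>x\<in>V. w x v)" "w u v \<le> (\<Sum>y\<in>V. w u y)"
    using assms by (auto intro: member_le_sum)
  then have "0 < a" "0 < b"
    using pos by (simp_all add: a_def b_def)
  then have "0 < \<delta> * a + (1 - \<delta>) * b"
    using assms(3,4) by (cases "\<delta> = 0") (auto intro!: add_pos_nonneg mult_pos_pos)
  moreover have "0 < real (card V)"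
    using assms(1,5) card_gt_0_iff by auto
  ultimately show "0 < copy_prob V w \<delta> u v"
    by (simp add: copy_prob_def a_def b_def)
qed

lemma strongly_connected_copy_prob:
  assumes "finite V" "\<And>u v. 0 \<le> w u v" "0 \<le> \<delta>" "\<delta> \<le> 1" "strongly_connected V w"
  shows "strongly_connected V (copy_prob V w \<delta>)"
proof -
  have "edges V (copy_prob V w \<delta>) = edges V w"
    using copy_prob_pos_iff[OF assms(1-4)] by (auto simp: edges_def)
  then show ?thesis
    using assms(5) by (simp add: strongly_connected_def)
qed

lemma copy_prob_sum:
  assumes "finite V" "V \<noteq> {}"
    and "\<And>v. v \<in> V \<Longrightarrow> 0 < (\<Sum>x\<in>V. w x v)" "\<And>u. u \<in> V \<Longrightarrow> 0 < (\<Sum>y\<in>V. w u y)"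
  shows "(\<Sum>u\<in>V. \<Sum>v\<in>V. copy_prob V w \<delta> u v) = 1"
proof -
  have in_normalized: "(\<Sum>u\<in>V. w u v / (\<Sum>x\<in>V. w x v)) = 1" if "v \<in> V" for v
    using assms(3)[OF that] by (simp add: sum_divide_distrib[symmetric])
  have out_normalized: "(\<Sum>v\<in>V. w u v / (\<Sum>y\<in>V. w u y)) = 1" if "u \<in> V" for u
    using assms(4)[OF that] by (simp add: sum_divide_distrib[symmetric])
  let ?N = "real (card V)"
  have "copy_prob V w \<delta> u v =
      \<delta> / ?N * (w u v / (\<Sum>x\<in>V. w x v)) + (1 - \<delta>) / ?N * (w u v / (\<Sum>y\<in>V. w u y))" for u v
    by (simp add: copy_prob_def add_divide_distrib ac_simps)
  then have "(\<Sum>u\<in>V. \<Sum>v\<in>V. copy_prob V w \<delta> u v) =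
      \<delta> / ?N * (\<Sum>u\<in>V. \<Sum>v\<in>V. w u v / (\<Sum>x\<in>V. w x v))
    + (1 - \<delta>) / ?N * (\<Sum>u\<in>V. \<Sum>v\<in>V. w u v / (\<Sum>y\<in>V. w u y))"
    by (simp add: sum.distrib sum_distrib_left)
  also have "\<dots> = \<delta> / ?N * (\<Sum>v\<in>V. \<Sum>u\<in>V. w u v / (\<Sum>x\<in>V. w x v))
    + (1 - \<delta>) / ?N * (\<Sum>u\<in>V. \<Sum>v\<in>V. w u v / (\<Sum>y\<in>V. w u y))"
    by (subst (1) sum.swap) (rule refl)
  also have "\<dots> = 1"
    using assms(1,2) by (simp add: in_normalized out_normalized divide_simps)
  finally show ?thesis .
qed

locale neutral_copying =
  fixes V :: "'v set" and q :: "'v \<Rightarrow> 'v \<Rightarrow> real"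
  assumes finite_V: "finite V"
    and q_nonneg: "\<And>u v. 0 \<le> q u v"
    and q_sum: "(\<Sum>u\<in>V. \<Sum>v\<in>V. q u v) = 1"
    and connected: "strongly_connected V q"
begin

abbreviation step :: "('v set \<Rightarrow> real) \<Rightarrow> 'v set \<Rightarrow> real"
  where "step \<equiv> neutral_step V q"

definition fixation_at :: "nat \<Rightarrow> 'v set \<Rightarrow> real"
  where "fixation_at n = (step ^^ n) (\<lambda>S. of_bool (S = V))"

definition undecided_at :: "nat \<Rightarrow> 'v set \<Rightarrow> real"
  where "undecided_at n = (step ^^ n) (\<lambda>S. of_bool (S \<noteq> {} \<and> S \<noteq> V))"

lemma V_not_empty: "V \<noteq> {}"
  using q_sum by auto

lemma fixation_at_Suc: "fixation_at (Suc n) = step (fixation_at n)"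
  by (simp add: fixation_at_def)

lemma undecided_at_Suc: "undecided_at (Suc n) = step (undecided_at n)"
  by (simp add: undecided_at_def)

lemma step_mono:
  assumes "\<And>S. S \<subseteq> V \<Longrightarrow> f S \<le> g S" "S \<subseteq> V"
  shows "step f S \<le> step g S"
  unfolding neutral_step_def
  using assms by (intro sum_mono mult_left_mono q_nonneg) (simp_all add: upd_subset)

lemma iter_step_mono:
  assumes "\<And>S. S \<subseteq> V \<Longrightarrow> f S \<le> g S" "S \<subseteq> V"
  shows "(step ^^ n) f S \<le> (step ^^ n) g S"
  using assms(2)
proof (induction n arbitrary: S)
  case 0
  then show ?case using assms(1) by simp
next
  case (Suc n)
  then show ?case by (simp add: step_mono)
qed

lemma iter_step_scale: "(step ^^ n) (\<lambda>S. c * f S) S = c * (step ^^ n) f S"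
proof (induction n arbitrary: S)
  case (Suc n)
  then show ?case by (simp add: neutral_step_def sum_distrib_left mult.left_commute)
qed simp

lemma iter_step_bounded:
  assumes "\<And>S. 0 \<le> f S \<and> f S \<le> 1"
  shows "0 \<le> (step ^^ n) f S \<and> (step ^^ n) f S \<le> 1"
proof (induction n arbitrary: S)
  case 0
  then show ?case using assms by simp
next
  case (Suc n)
  have "0 \<le> step ((step ^^ n) f) S"
    unfolding neutral_step_def[of V q "(step ^^ n) f"]
    using Suc q_nonneg by (intro sum_nonneg mult_nonneg_nonneg) auto
  moreover have "step ((step ^^ n) f) S \<le> (\<Sum>u\<in>V. \<Sum>v\<in>V. q u v)"
    unfolding neutral_step_def[of V q "(step ^^ n) f"]
    using Suc q_nonneg by (intro sum_mono mult_left_le) auto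
  ultimately show ?case using q_sum by simp
qed

lemma iter_step_absorbing:
  assumes "X = {} \<or> X = V"
  shows "(step ^^ n) f X = f X"
proof -
  have "upd X u v = X" if "u \<in> V" "v \<in> V" for u v
    using assms that by (auto simp: upd_empty upd_full)
  then show ?thesis
    by (induction n) (simp_all add: neutral_step_absorbing q_sum)
qed

lemma iter_step_incseq:
  assumes "\<And>S. S \<subseteq> V \<Longrightarrow> f S \<le> step f S" "S \<subseteq> V"
  shows "incseq (\<lambda>n. (step ^^ n) f S)"
proof (rule incseq_SucI)
  show "(step ^^ n) f S \<le> (step ^^ Suc n) f S" for n
    using iter_step_mono[OF assms] by (simp add: funpow_Suc_right del: funpow.simps)
qed

lemma iter_step_decseq:
  assumes "\<And>S. S \<subseteq> V \<Longrightarrow> step f S \<le> f S" "S \<subseteq> V"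
  shows "decseq (\<lambda>n. (step ^^ n) f S)"
proof (rule decseq_SucI)
  show "(step ^^ Suc n) f S \<le> (step ^^ n) f S" for n
    using iter_step_mono[OF assms] by (simp add: funpow_Suc_right del: funpow.simps)
qed

lemma fixation_at_bounded: "0 \<le> fixation_at n S \<and> fixation_at n S \<le> 1"
  unfolding fixation_at_def by (rule iter_step_bounded) simp

lemma fixation_at_tendsto:
  assumes "S \<subseteq> V"
  shows "(\<lambda>n. fixation_at n S) \<longlonglongrightarrow> (SUP n. fixation_at n S)"
proof (rule LIMSEQ_incseq_SUP)
  show "bdd_above (range (\<lambda>n. fixation_at n S))"
    using fixation_at_bounded by (intro bdd_aboveI[of _ 1]) auto
  have "of_bool (X = V) \<le> step (\<lambda>S. of_bool (S = V)) X" for X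
    using iter_step_bounded[of "\<lambda>S. of_bool (S = V)" 1] iter_step_absorbing[of V 1]
    by (cases "X = V") simp_all
  then show "incseq (\<lambda>n. fixation_at n S)"
    unfolding fixation_at_def using assms by (intro iter_step_incseq)
qed

lemma undecided_at_bounded: "0 \<le> undecided_at n S \<and> undecided_at n S \<le> 1"
  unfolding undecided_at_def by (rule iter_step_bounded) simp

lemma undecided_at_absorbing: "S = {} \<or> S = V \<Longrightarrow> undecided_at n S = 0"
  unfolding undecided_at_def by (auto simp: iter_step_absorbing)

lemma undecided_at_decseq:
  assumes "S \<subseteq> V"
  shows "decseq (\<lambda>n. undecided_at n S)"
proof -
  have "step (\<lambda>S. of_bool (S \<noteq> {} \<and> S \<noteq> V)) X \<le> of_bool (X \<noteq> {} \<and> X \<noteq> V)" for X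
    using undecided_at_bounded[of 1 X] undecided_at_absorbing[of X 1]
    by (cases "X = {} \<or> X = V") (auto simp: undecided_at_def)
  then show ?thesis
    unfolding undecided_at_def using assms by (intro iter_step_decseq)
qed

lemma step_le_one_minus_move:
  assumes "\<And>S. f S \<le> 1" "u \<in> V" "v \<in> V"
  shows "step f S \<le> 1 - q u v * (1 - f (upd S u v))"
proof -
  let ?g = "\<lambda>u v. q u v * (1 - f (upd S u v))"
  have g_nonneg: "0 \<le> ?g u' v'" for u' v'
    using assms(1) q_nonneg by simp
  have "?g u v \<le> (\<Sum>v'\<in>V. ?g u v')"
    using assms(3) finite_V g_nonneg by (intro member_le_sum) auto
  also have "\<dots> \<le> (\<Sum>u'\<in>V. \<Sum>v'\<in>V. ?g u' v')"
    using assms(2) finite_V g_nonneg by (intro member_le_sum[of u V] sum_nonneg) auto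
  also have "\<dots> = 1 - step f S"
    using q_sum by (simp add: neutral_step_def right_diff_distrib sum_subtractf)
  finally show ?thesis by simp
qed

lemma edge_weight_lower_bound:
  obtains m where "0 < m" "m \<le> 1" "\<And>u v. (u, v) \<in> edges V q \<Longrightarrow> m \<le> q u v"
proof
  let ?W = "insert 1 ((\<lambda>(u, v). q u v) ` edges V q)"
  have "edges V q \<subseteq> V \<times> V"
    by (auto simp: edges_def)
  then have "finite ?W"
    using finite_V by (simp add: finite_subset)
  then show "0 < Min ?W" "Min ?W \<le> 1"
    by (auto simp: edges_def)
  show "Min ?W \<le> q u v" if "(u, v) \<in> edges V q" for u v
    using \<open>finite ?W\<close> that by (intro Min_le) (auto intro: rev_image_eqI)
qed
lemma undecided_at_le:
  assumes m: "0 < m" "m \<le> 1" "\<And>u v. (u, v) \<in> edges V q \<Longrightarrow> m \<le> q u v"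
  shows "S \<subseteq> V \<Longrightarrow> card (V - S) \<le> k \<Longrightarrow> undecided_at k S \<le> 1 - m ^ k"
proof (induction k arbitrary: S)
  case 0
  then have "V - S = {}"
    using finite_V by simp
  then have "S = V"
    using "0.prems"(1) by blast
  then show ?case by (simp add: undecided_at_absorbing)
next
  case (Suc k)
  show ?case
  proof (cases "S = {} \<or> S = V")
    case True
    then show ?thesis
      using m power_le_one[of m "Suc k"] by (simp add: undecided_at_absorbing)
  next
    case False
    then obtain u v where uv: "u \<in> S" "v \<in> V - S" "0 < q u v"
      using strongly_connected_escape[OF connected Suc.prems(1)] by blast
    have "V - insert v S = (V - S) - {v}"
      by blast
    then have "card (V - insert v S) \<le> k"
      using Suc.prems(2) uv finite_V by (simp add: card_Diff_singleton)
    then have IH: "undecided_at k (insert v S) \<le> 1 - m ^ k"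
      using Suc.IH Suc.prems(1) uv by simp
    have "m * m ^ k \<le> q u v * (1 - undecided_at k (insert v S))"
      using IH m uv Suc.prems(1) by (intro mult_mono) (auto simp: edges_def)
    moreover have "undecided_at (Suc k) S \<le> 1 - q u v * (1 - undecided_at k (upd S u v))"
      unfolding undecided_at_Suc
      using undecided_at_bounded uv Suc.prems(1) by (intro step_le_one_minus_move) auto
    ultimately show ?thesis
      using uv by (simp add: upd_def)
  qed
qed

lemma undecided_at_contraction:
  obtains c where "0 \<le> c" "c < 1"
    "\<And>n S. S \<subseteq> V \<Longrightarrow> undecided_at (n + card V) S \<le> c * undecided_at n S"
proof -
  obtain m where m: "0 < m" "m \<le> 1" "\<And>u v. (u, v) \<in> edges V q \<Longrightarrow> m \<le> q u v"
    using edge_weight_lower_bound by blast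
  define c where "c = 1 - m ^ card V"
  have "0 < m ^ card V" "m ^ card V \<le> 1"
    using m by (simp_all add: power_le_one)
  then have c: "0 \<le> c" "c < 1"
    unfolding c_def by linarith+
  have N: "undecided_at (card V) S \<le> c * of_bool (S \<noteq> {} \<and> S \<noteq> V)" if "S \<subseteq> V" for S
  proof (cases "S = {} \<or> S = V")
    case True
    then show ?thesis by (auto simp: undecided_at_absorbing)
  next
    case False
    have "card (V - S) \<le> card V"
      using finite_V by (simp add: card_mono)
    then show ?thesis
      using undecided_at_le[OF m that] False by (simp add: c_def)
  qed
  have "undecided_at (n + card V) S \<le> c * undecided_at n S" if "S \<subseteq> V" for n S
  proof -
    have "undecided_at (n + card V) S = (step ^^ n) (undecided_at (card V)) S"
      by (simp add: undecided_at_def funpow_add)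
    also have "\<dots> \<le> (step ^^ n) (\<lambda>S. c * of_bool (S \<noteq> {} \<and> S \<noteq> V)) S"
      using N that by (rule iter_step_mono)
    also have "\<dots> = c * undecided_at n S"
      by (simp add: iter_step_scale undecided_at_def)
    finally show ?thesis .
  qed
  with c that show ?thesis by blast
qed

lemma undecided_at_tendsto_zero:
  assumes "S \<subseteq> V"
  shows "(\<lambda>n. undecided_at n S) \<longlonglongrightarrow> 0"
proof -
  obtain c where c: "0 \<le> c" "c < 1"
    and contraction: "\<And>n. undecided_at (n + card V) S \<le> c * undecided_at n S"
    using undecided_at_contraction assms by metis
  define L where "L = (INF n. undecided_at n S)"
  have lim: "(\<lambda>n. undecided_at n S) \<longlonglongrightarrow> L"
    unfolding L_def using undecided_at_decseq[OF assms] undecided_at_bounded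
    by (intro LIMSEQ_decseq_INF bdd_belowI[of _ 0]) auto
  have "L \<le> c * L"
    using LIMSEQ_ignore_initial_segment[OF lim, of "card V"] tendsto_mult_left[OF lim, of c]
      contraction by (intro LIMSEQ_le) auto
  moreover have "0 \<le> L"
    using lim undecided_at_bounded by (intro tendsto_lowerbound) (auto simp: always_eventually)
  ultimately have "L = 0"
    using c by (smt (verit) mult_le_cancel_right1)
  with lim show ?thesis by simp
qed

lemma fixation_at_Un_defect:
  assumes "A \<subseteq> V" "B \<subseteq> V" "A \<inter> B = {}"
  shows "0 \<le> fixation_at n (A \<union> B) - fixation_at n A - fixation_at n B
    \<and> fixation_at n (A \<union> B) - fixation_at n A - fixation_at n B \<le> undecided_at n A"
  using assms
proof (induction n arbitrary: A B)
  case 0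
  then show ?case
    using V_not_empty by (auto simp: fixation_at_def undecided_at_def)
next
  case (Suc n)
  define defect where
    "defect A B = fixation_at n (A \<union> B) - fixation_at n A - fixation_at n B" for A B
  have "fixation_at (Suc n) (A \<union> B) - fixation_at (Suc n) A - fixation_at (Suc n) B
      = (\<Sum>u\<in>V. \<Sum>v\<in>V. q u v * defect (upd A u v) (upd B u v))"
    by (simp add: fixation_at_Suc neutral_step_def defect_def upd_Un
        sum_subtractf right_diff_distrib)
  moreover have "0 \<le> q u v * defect (upd A u v) (upd B u v)
      \<and> q u v * defect (upd A u v) (upd B u v) \<le> q u v * undecided_at n (upd A u v)"
    if "v \<in> V" for u v
    using Suc.IH[of "upd A u v" "upd B u v"] Suc.prems that q_nonneg[of u v]
    by (simp add: defect_def upd_subset upd_disjoint mult_left_mono)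
  ultimately show ?case
    unfolding undecided_at_Suc neutral_step_def by (auto intro!: sum_nonneg sum_mono)
qed

theorem SUP_fixation_at_Un:
  assumes "A \<subseteq> V" "B \<subseteq> V" "A \<inter> B = {}"
  shows "(SUP n. fixation_at n (A \<union> B)) = (SUP n. fixation_at n A) + (SUP n. fixation_at n B)"
proof -
  let ?defect = "\<lambda>n. fixation_at n (A \<union> B) - fixation_at n A - fixation_at n B"
  have "?defect \<longlonglongrightarrow> (SUP n. fixation_at n (A \<union> B)) - (SUP n. fixation_at n A) - (SUP n. fixation_at n B)"
    using assms by (simp add: tendsto_diff fixation_at_tendsto)
  moreover have "?defect \<longlonglongrightarrow> 0"
  proof (rule tendsto_sandwich)
    show "\<forall>\<^sub>F n in sequentially. 0 \<le> ?defect n" "\<forall>\<^sub>F n in sequentially. ?defect n \<le> undecided_at n A"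
      using fixation_at_Un_defect[OF assms] by (simp_all add: always_eventually)
  qed (use undecided_at_tendsto_zero[OF assms(1)] in simp_all)
  ultimately show ?thesis
    by (metis (no_types, lifting) LIMSEQ_unique diff_diff_eq eq_iff_diff_eq_0)
qed

end

lemma neutral_copying_copy_prob:
  assumes "finite V" "\<And>u v. 0 \<le> w u v" "0 \<le> \<delta>" "\<delta> \<le> 1" "strongly_connected V w"
    and "a \<in> V" "b \<in> V" "a \<noteq> b"
  shows "neutral_copying V (copy_prob V w \<delta>)"
proof
  show "finite V" by fact
  show "0 \<le> copy_prob V w \<delta> u v" for u v
    using assms(2-4) by (rule copy_prob_nonneg)
  show "strongly_connected V (copy_prob V w \<delta>)"
    using assms(1-5) by (rule strongly_connected_copy_prob)
  have other: "\<exists>x\<in>V. x \<noteq> v" for v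
    using assms(6-8) by (cases "v = a") auto
  show "(\<Sum>u\<in>V. \<Sum>v\<in>V. copy_prob V w \<delta> u v) = 1"
  proof (rule copy_prob_sum)
    show "0 < (\<Sum>x\<in>V. w x v)" if "v \<in> V" for v
      using other[of v] strongly_connected_in_degree_pos[OF assms(5,1,2) that] by blast
    show "0 < (\<Sum>y\<in>V. w u y)" if "u \<in> V" for u
      using other[of u] strongly_connected_out_degree_pos[OF assms(5,1,2) that] by blast
  qed (use assms(1,6) in auto)
qed

theorem mainTheorem9:
  fixes V :: "'v set" and w :: "'v \<Rightarrow> 'v \<Rightarrow> real" and \<delta> :: real and S T :: "'v set"
  assumes "finite V" and "V \<noteq> {}"
    and "\<And>u v. w u v \<ge> 0"
    and "\<And>u v. w u v > 0 \<Longrightarrow> u \<in> V \<and> v \<in> V"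
    and "strongly_connected V w"
    and "0 \<le> \<delta>" and "\<delta> \<le> 1"
    and "T \<subseteq> S" and "S \<subseteq> V"
  shows "fp V w 1 \<delta> S = fp V w 1 \<delta> T + fp V w 1 \<delta> (S - T)"
proof (cases "T = {} \<or> T = S")
  case True
  then show ?thesis
    using fp_neutral_empty[OF assms(1,2)] by auto
next
  case False
  then obtain a b where "a \<in> T" "b \<in> S - T"
    using assms(8) by blast
  then interpret neutral_copying V "copy_prob V w \<delta>"
    using assms(1,3,5-9) by (intro neutral_copying_copy_prob[of _ _ _ a b]) auto
  have fp_eq: "fp V w 1 \<delta> X = (SUP n. fixation_at n X)" if "X \<subseteq> V" for X
    using assms(1) that by (simp add: fp_def fixation_at_def all_mutant_prob_neutral)
  have parts: "T \<subseteq> V" "S - T \<subseteq> V" "T \<inter> (S - T) = {}"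
    using assms(8,9) by auto
  have "fp V w 1 \<delta> S = (SUP n. fixation_at n (T \<union> (S - T)))"
    using assms(8,9) fp_eq by (simp add: Un_absorb1)
  also have "\<dots> = (SUP n. fixation_at n T) + (SUP n. fixation_at n (S - T))"
    using parts by (rule SUP_fixation_at_Un)
  also have "\<dots> = fp V w 1 \<delta> T + fp V w 1 \<delta> (S - T)"
    using parts fp_eq by simp
  finally show ?thesis .
qed

end
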